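(* Let $Q$ be a Boolean conjunctive query without self-joins and $I$ an instance. Then there exists a purified instance $I^p\subseteq I$ such that $\mathcal M_Q(I)=\mathcal M_Q(I^p)$. In particular $I\vDash Q$ iff $I^p\vDash Q$.
   Context: Relations carry keys and are of consistent or inconsistent type; a key-group is the set of tuples of a relation with a given key value; a repair of $I$ is a maximal subset of $I$ satisfying all key constraints (one tuple per key-group); $I\vDash Q$ means $Q(r)$ holds for every repair $r$. The full query $Q^f$ has the body of $Q$ with all variables free, so $Q^f(r)$ is the set of satisfying valuations (tuples indexed by the variables of $Q$). A repair $r$ is frugal for $Q$ if no repair $r'$ of $I$ satisfies $Q^f(r')\subsetneq Q^f(r)$. $\mathcal M_Q(I)=\{Q^f(r): r \text{ a frugal repair of } I \text{ for } Q\}$. An instance $I$ is purified (for $Q$) if for every relation $R$ occurring in $Q$, $\Pi_{attr(R)}(Q^f(I))=R^I$, where $\Pi_{attr(R)}$ projects onto the variables in the atom of $R$ (so every tuple of $I$ participates in some answer of $Q^f$ on $I$). *)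

theory Defs
  imports Main
begin

type_synonym ('r, 'v) fact = "'r \<times> 'v list"
type_synonym ('r, 'x) atom = "'r \<times> 'x list"

definition key_equal :: "('r \<Rightarrow> nat) \<Rightarrow> ('r, 'v) fact \<Rightarrow> ('r, 'v) fact \<Rightarrow> bool" where
  "key_equal kl f g \<longleftrightarrow> fst f = fst g \<and> take (kl (fst f)) (snd f) = take (kl (fst g)) (snd g)"

definition satisfies_keys :: "('r \<Rightarrow> nat) \<Rightarrow> ('r, 'v) fact set \<Rightarrow> bool" where
  "satisfies_keys kl r \<longleftrightarrow> (\<forall>f\<in>r. \<forall>g\<in>r. key_equal kl f g \<longrightarrow> f = g)"

definition is_repair :: "('r \<Rightarrow> nat) \<Rightarrow> ('r, 'v) fact set \<Rightarrow> ('r, 'v) fact set \<Rightarrow> bool" where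
  "is_repair kl I r \<longleftrightarrow> r \<subseteq> I \<and> satisfies_keys kl r \<and>
     (\<forall>r'. r \<subseteq> r' \<and> r' \<subseteq> I \<and> satisfies_keys kl r' \<longrightarrow> r' = r)"

definition qvars :: "('r, 'x) atom set \<Rightarrow> 'x set" where
  "qvars Q = (\<Union>a\<in>Q. set (snd a))"

definition full_query :: "('r, 'x) atom set \<Rightarrow> ('r, 'v) fact set \<Rightarrow> ('x \<Rightarrow> 'v) set" where
  "full_query Q r = {\<theta>. (\<forall>x. x \<notin> qvars Q \<longrightarrow> \<theta> x = undefined) \<and>
                       (\<forall>a\<in>Q. (fst a, map \<theta> (snd a)) \<in> r)}"

definition query_holds :: "('r, 'x) atom set \<Rightarrow> ('r, 'v) fact set \<Rightarrow> bool" where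
  "query_holds Q r \<longleftrightarrow> full_query Q r \<noteq> {}"

definition certain :: "('r \<Rightarrow> nat) \<Rightarrow> ('r, 'x) atom set \<Rightarrow> ('r, 'v) fact set \<Rightarrow> bool" where
  "certain kl Q I \<longleftrightarrow> (\<forall>r. is_repair kl I r \<longrightarrow> query_holds Q r)"

definition frugal :: "('r \<Rightarrow> nat) \<Rightarrow> ('r, 'x) atom set \<Rightarrow> ('r, 'v) fact set \<Rightarrow> ('r, 'v) fact set \<Rightarrow> bool" where
  "frugal kl Q I r \<longleftrightarrow> is_repair kl I r \<and>
     \<not> (\<exists>r'. is_repair kl I r' \<and> full_query Q r' \<subset> full_query Q r)"

definition MQ :: "('r \<Rightarrow> nat) \<Rightarrow> ('r, 'x) atom set \<Rightarrow> ('r, 'v) fact set \<Rightarrow> ('x \<Rightarrow> 'v) set set" where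
  "MQ kl Q I = {full_query Q r | r. frugal kl Q I r}"

definition purified :: "('r, 'x) atom set \<Rightarrow> ('r, 'v) fact set \<Rightarrow> bool" where
  "purified Q I \<longleftrightarrow> (\<forall>a\<in>Q. (\<lambda>\<theta>. (fst a, map \<theta> (snd a))) ` full_query Q I = {f\<in>I. fst f = fst a})"

definition sjf_bcq :: "('r \<Rightarrow> nat) \<Rightarrow> ('r, 'x) atom set \<Rightarrow> bool" where
  "sjf_bcq arity Q \<longleftrightarrow> finite Q \<and> inj_on fst Q \<and> (\<forall>a\<in>Q. length (snd a) = arity (fst a))"

definition wf_schema :: "('r \<Rightarrow> nat) \<Rightarrow> ('r \<Rightarrow> nat) \<Rightarrow> bool" where
  "wf_schema arity kl \<longleftrightarrow> (\<forall>R. kl R \<le> arity R)"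

definition wf_instance :: "('r \<Rightarrow> nat) \<Rightarrow> ('r \<Rightarrow> nat) \<Rightarrow> ('r \<Rightarrow> bool) \<Rightarrow> ('r, 'v) fact set \<Rightarrow> bool" where
  "wf_instance arity kl cons I \<longleftrightarrow> finite I \<and> (\<forall>f\<in>I. length (snd f) = arity (fst f)) \<and>
     (\<forall>f\<in>I. \<forall>g\<in>I. cons (fst f) \<and> key_equal kl f g \<longrightarrow> f = g)"

end

theory Submission
  imports Defs
begin

text \<open>Call a fact \<open>g\<close> of \<open>J\<close> useless if it is not the image of any answer of the full
  query on \<open>J\<close>. Deleting the whole key-group of a useless fact does not change the minimal
  answer sets: a repair of the smaller instance extends by \<open>g\<close> to a repair of \<open>J\<close> with the
  same answers (\<open>g\<close> matches no atom), while a repair of \<open>J\<close> shrinks to a repair of the smaller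
  instance with fewer answers. Since the query has no self-joins, an impure instance always
  contains a useless fact, so repeating this deletion terminates in a purified subinstance.\<close>

lemma key_equal_refl: "key_equal kl f f"
  unfolding key_equal_def by simp

lemma key_equal_sym: "key_equal kl f g \<Longrightarrow> key_equal kl g f"
  unfolding key_equal_def by auto

lemma key_equal_trans: "key_equal kl f g \<Longrightarrow> key_equal kl g h \<Longrightarrow> key_equal kl f h"
  unfolding key_equal_def by auto

lemma satisfies_keys_subset: "satisfies_keys kl s \<Longrightarrow> r \<subseteq> s \<Longrightarrow> satisfies_keys kl r"
  unfolding satisfies_keys_def by blast

lemma full_query_mono: "r \<subseteq> s \<Longrightarrow> full_query Q r \<subseteq> full_query Q s"
  unfolding full_query_def by blast

definition minimal_sets :: "'a set set \<Rightarrow> 'a set set" where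
  "minimal_sets S = {s \<in> S. \<not> (\<exists>t\<in>S. t \<subset> s)}"

definition repair_answers ::
    "('r \<Rightarrow> nat) \<Rightarrow> ('r, 'x) atom set \<Rightarrow> ('r, 'v) fact set \<Rightarrow> ('x \<Rightarrow> 'v) set set" where
  "repair_answers kl Q J = {full_query Q r | r. is_repair kl J r}"

lemma MQ_eq_minimal_sets: "MQ kl Q J = minimal_sets (repair_answers kl Q J)"
proof (intro set_eqI iffI)
  fix s assume "s \<in> MQ kl Q J"
  then obtain r where "s = full_query Q r" "frugal kl Q J r" unfolding MQ_def by blast
  then show "s \<in> minimal_sets (repair_answers kl Q J)"
    unfolding minimal_sets_def repair_answers_def frugal_def by blast
next
  fix s assume s: "s \<in> minimal_sets (repair_answers kl Q J)"
  then obtain r where r: "s = full_query Q r" "is_repair kl J r"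
    unfolding minimal_sets_def repair_answers_def by blast
  with s have "frugal kl Q J r"
    unfolding minimal_sets_def repair_answers_def frugal_def by blast
  with r(1) show "s \<in> MQ kl Q J" unfolding MQ_def by blast
qed

lemma minimal_sets_eq_if_dominating_subset:
  assumes sub: "S' \<subseteq> S" and dom: "\<And>s. s \<in> S \<Longrightarrow> \<exists>t\<in>S'. t \<subseteq> s"
  shows "minimal_sets S = minimal_sets S'"
proof (intro set_eqI iffI)
  fix s assume "s \<in> minimal_sets S"
  then have s: "s \<in> S" and min: "\<And>t. t \<in> S \<Longrightarrow> \<not> t \<subset> s"
    unfolding minimal_sets_def by blast+
  obtain t where "t \<in> S'" "t \<subseteq> s" using dom[OF s] by blast
  with sub min have "s \<in> S'" by (metis psubsetI subsetD)
  with sub min show "s \<in> minimal_sets S'" unfolding minimal_sets_def by blast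
next
  fix s assume "s \<in> minimal_sets S'"
  then have s: "s \<in> S'" and min: "\<And>t. t \<in> S' \<Longrightarrow> \<not> t \<subset> s"
    unfolding minimal_sets_def by blast+
  have "\<not> t \<subset> s" if t: "t \<in> S" for t
  proof
    assume "t \<subset> s"
    moreover obtain u where "u \<in> S'" "u \<subseteq> t" using dom[OF t] by blast
    ultimately show False using min by (meson subset_psubset_trans)
  qed
  with s sub show "s \<in> minimal_sets S" unfolding minimal_sets_def by blast
qed

lemma certain_iff_empty_notin_MQ: "certain kl Q J \<longleftrightarrow> {} \<notin> MQ kl Q J"
  unfolding certain_def MQ_def frugal_def query_holds_def by blast

definition key_group :: "('r \<Rightarrow> nat) \<Rightarrow> ('r, 'v) fact set \<Rightarrow> ('r, 'v) fact \<Rightarrow> ('r, 'v) fact set" where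
  "key_group kl J g = {f \<in> J. key_equal kl f g}"

lemma satisfies_keys_Un_key_group:
  assumes "satisfies_keys kl A" "satisfies_keys kl C"
    and "A \<subseteq> J - key_group kl J g" "C \<subseteq> key_group kl J g"
  shows "satisfies_keys kl (A \<union> C)"
  unfolding satisfies_keys_def
proof (intro ballI impI)
  fix f h assume f: "f \<in> A \<union> C" and h: "h \<in> A \<union> C" and fh: "key_equal kl f h"
  have "key_equal kl f g" if "f \<in> A" "h \<in> C"
    using that fh assms(4) key_equal_trans unfolding key_group_def by blast
  moreover have "key_equal kl h g" if "h \<in> A" "f \<in> C"
    using that fh assms(4) key_equal_trans key_equal_sym unfolding key_group_def by blast
  ultimately show "f = h"
    using f h fh assms unfolding satisfies_keys_def key_group_def by blast
qed

lemma is_repair_maximal: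
  "is_repair kl J r \<Longrightarrow> r \<subseteq> r' \<Longrightarrow> r' \<subseteq> J \<Longrightarrow> satisfies_keys kl r' \<Longrightarrow> r' = r"
  unfolding is_repair_def by blast

lemma is_repair_insert_key_group:
  assumes "g \<in> J" and r: "is_repair kl (J - key_group kl J g) r"
  shows "is_repair kl J (insert g r)"
  unfolding is_repair_def
proof (intro conjI allI impI)
  let ?B = "key_group kl J g"
  have gB: "g \<in> ?B" using assms(1) key_equal_refl unfolding key_group_def by blast
  have r_sub: "r \<subseteq> J - ?B" and r_keys: "satisfies_keys kl r"
    using r unfolding is_repair_def by blast+
  show "insert g r \<subseteq> J" using assms(1) r_sub by blast
  have "satisfies_keys kl {g}" unfolding satisfies_keys_def by blast
  from satisfies_keys_Un_key_group[OF r_keys this r_sub] gB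
  show "satisfies_keys kl (insert g r)" by simp
  fix r'' assume r'': "insert g r \<subseteq> r'' \<and> r'' \<subseteq> J \<and> satisfies_keys kl r''"
  have "satisfies_keys kl (r'' - ?B)"
    using r'' satisfies_keys_subset[of kl r'' "r'' - ?B"] by blast
  then have "r'' - ?B = r"
    using r'' r_sub by (intro is_repair_maximal[OF r]) auto
  moreover have "r'' \<inter> ?B \<subseteq> {g}"
  proof
    fix f assume "f \<in> r'' \<inter> ?B"
    then show "f \<in> {g}" using r'' unfolding satisfies_keys_def key_group_def by blast
  qed
  ultimately show "r'' = insert g r" using r'' by blast
qed

lemma is_repair_diff_key_group:
  assumes r: "is_repair kl J r"
  shows "is_repair kl (J - key_group kl J g) (r - key_group kl J g)"
  unfolding is_repair_def
proof (intro conjI allI impI)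
  let ?B = "key_group kl J g"
  have r_sub: "r \<subseteq> J" and r_keys: "satisfies_keys kl r"
    using r unfolding is_repair_def by blast+
  show "r - ?B \<subseteq> J - ?B" using r_sub by blast
  show "satisfies_keys kl (r - ?B)" using r_keys by (rule satisfies_keys_subset) blast
  fix r'' assume r'': "r - ?B \<subseteq> r'' \<and> r'' \<subseteq> J - ?B \<and> satisfies_keys kl r''"
  have "satisfies_keys kl (r \<inter> ?B)" using r_keys by (rule satisfies_keys_subset) blast
  then have "satisfies_keys kl (r'' \<union> (r \<inter> ?B))"
    using r'' by (intro satisfies_keys_Un_key_group[of kl r'' "r \<inter> ?B" J g]) auto
  then have "r'' \<union> (r \<inter> ?B) = r"
    using r'' r_sub by (intro is_repair_maximal[OF r]) auto
  then show "r'' = r - ?B" using r'' by blast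
qed

definition useless_fact :: "('r, 'x) atom set \<Rightarrow> ('r, 'v) fact set \<Rightarrow> ('r, 'v) fact \<Rightarrow> bool" where
  "useless_fact Q J g \<longleftrightarrow> (\<forall>\<theta>\<in>full_query Q J. \<forall>b\<in>Q. (fst b, map \<theta> (snd b)) \<noteq> g)"

lemma full_query_insert_useless:
  assumes "useless_fact Q J g" "insert g r \<subseteq> J"
  shows "full_query Q (insert g r) = full_query Q r"
proof
  show "full_query Q (insert g r) \<subseteq> full_query Q r"
  proof
    fix \<theta> assume \<theta>: "\<theta> \<in> full_query Q (insert g r)"
    then have "\<theta> \<in> full_query Q J" using full_query_mono[OF assms(2)] by blast
    then show "\<theta> \<in> full_query Q r"
      using \<theta> assms(1) unfolding useless_fact_def full_query_def by auto
  qed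
qed (rule full_query_mono, blast)

lemma MQ_diff_key_group_useless:
  assumes "g \<in> J" "useless_fact Q J g"
  shows "MQ kl Q J = MQ kl Q (J - key_group kl J g)"
proof -
  let ?J' = "J - key_group kl J g"
  have "repair_answers kl Q ?J' \<subseteq> repair_answers kl Q J"
  proof
    fix s assume "s \<in> repair_answers kl Q ?J'"
    then obtain r where s: "s = full_query Q r" and r: "is_repair kl ?J' r"
      unfolding repair_answers_def by blast
    have "insert g r \<subseteq> J" using assms(1) r unfolding is_repair_def by blast
    then have "full_query Q (insert g r) = s"
      unfolding s by (rule full_query_insert_useless[OF assms(2)])
    moreover have "is_repair kl J (insert g r)" by (rule is_repair_insert_key_group[OF assms(1) r])
    ultimately show "s \<in> repair_answers kl Q J" unfolding repair_answers_def by blast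
  qed
  moreover have "\<exists>t\<in>repair_answers kl Q ?J'. t \<subseteq> s" if hs: "s \<in> repair_answers kl Q J" for s
  proof -
    obtain r where s: "s = full_query Q r" and r: "is_repair kl J r"
      using hs unfolding repair_answers_def by blast
    have "full_query Q (r - key_group kl J g) \<in> repair_answers kl Q ?J'"
      using is_repair_diff_key_group[OF r] unfolding repair_answers_def by blast
    then show ?thesis using s full_query_mono[OF Diff_subset] by blast
  qed
  ultimately show ?thesis
    unfolding MQ_eq_minimal_sets by (rule minimal_sets_eq_if_dominating_subset)
qed

lemma useless_fact_if_not_purified:
  assumes "inj_on fst Q" "\<not> purified Q J"
  obtains g where "g \<in> J" "useless_fact Q J g"
proof -
  from assms(2) obtain a where a: "a \<in> Q"
    and ne: "(\<lambda>\<theta>. (fst a, map \<theta> (snd a))) ` full_query Q J \<noteq> {f \<in> J. fst f = fst a}"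
    unfolding purified_def by blast
  have "(\<lambda>\<theta>. (fst a, map \<theta> (snd a))) ` full_query Q J \<subseteq> {f \<in> J. fst f = fst a}"
    using a unfolding full_query_def by auto
  with ne obtain g where g: "g \<in> J" "fst g = fst a"
    and not_image: "g \<notin> (\<lambda>\<theta>. (fst a, map \<theta> (snd a))) ` full_query Q J"
    by blast
  have "useless_fact Q J g"
    unfolding useless_fact_def
  proof (intro ballI notI)
    fix \<theta> b assume \<theta>: "\<theta> \<in> full_query Q J" and b: "b \<in> Q" and gb: "(fst b, map \<theta> (snd b)) = g"
    then have "b = a" using g(2) a assms(1) by (auto dest: inj_onD)
    then show False using not_image \<theta> gb by blast
  qed
  with g(1) show thesis by (rule that)
qed

lemma exists_purified_subinstance_same_MQ:
  assumes "inj_on fst Q" "finite J"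
  shows "\<exists>Ip\<subseteq>J. purified Q Ip \<and> MQ kl Q J = MQ kl Q Ip"
  using assms(2)
proof (induction "card J" arbitrary: J rule: less_induct)
  case (less J)
  show ?case
  proof (cases "purified Q J")
    case False
    then obtain g where g: "g \<in> J" "useless_fact Q J g"
      using useless_fact_if_not_purified[OF assms(1)] by blast
    let ?J' = "J - key_group kl J g"
    have "g \<in> key_group kl J g" using g(1) key_equal_refl unfolding key_group_def by blast
    then have "?J' \<subset> J" using g(1) by blast
    then have "card ?J' < card J" by (rule psubset_card_mono[OF less.prems])
    moreover have "finite ?J'" using less.prems by blast
    ultimately obtain Ip where Ip: "Ip \<subseteq> ?J'" "purified Q Ip" "MQ kl Q ?J' = MQ kl Q Ip"
      using less.hyps by blast
    have "MQ kl Q J = MQ kl Q Ip" using MQ_diff_key_group_useless[OF g] Ip(3) by (rule trans)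
    with Ip(1,2) show ?thesis by blast
  qed blast
qed

theorem lemma2p3:
  fixes arity kl :: "'r \<Rightarrow> nat" and cons :: "'r \<Rightarrow> bool"
    and Q :: "('r, 'x) atom set" and I :: "('r, 'v) fact set"
  assumes "wf_schema arity kl"
    and "sjf_bcq arity Q"
    and "wf_instance arity kl cons I"
  shows "\<exists>Ip. Ip \<subseteq> I \<and> purified Q Ip \<and> MQ kl Q I = MQ kl Q Ip \<and>
              (certain kl Q I \<longleftrightarrow> certain kl Q Ip)"
proof -
  have "inj_on fst Q" "finite I"
    using assms(2,3) unfolding sjf_bcq_def wf_instance_def by simp_all
  then obtain Ip where Ip: "Ip \<subseteq> I" "purified Q Ip" "MQ kl Q I = MQ kl Q Ip"
    using exists_purified_subinstance_same_MQ[of Q I kl] by blast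
  have "certain kl Q I \<longleftrightarrow> certain kl Q Ip"
    unfolding certain_iff_empty_notin_MQ Ip(3) ..
  with Ip show ?thesis by blast
qed

end
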